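(* The rectangle locus for two pairs of lines in the plane is either the empty set, a point, a line with an open segment missing, a line, a hyperbola, or the entire plane.
   Context: A pair of lines means two distinct lines; two pairs of lines are distinct pairs, possibly sharing one line. The rectangle locus of two pairs $L_1,L_3$ and $L_2,L_4$ is the set of points $p$ in the plane that are the midpoint both of a segment joining $L_1$ and $L_3$ and of a segment joining $L_2$ and $L_4$, these two segments having equal length (equivalently, centers of possibly degenerate rectangles whose diagonals join the lines of the respective pairs). A hyperbola here may be degenerate, i.e. a set $\{{\bf x}:({\bf x}-{\bf p})^TC({\bf x}-{\bf p})=k\}$ with $C$ real symmetric $2\times2$, $\det C<0$, and any $k\in\mathbb{R}$. *)

theory Defs
  imports "HOL-Analysis.Analysis"
begin

type_synonym point = "real^2"

definition is_line :: "point set \<Rightarrow> bool" where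
  "is_line L \<longleftrightarrow> (\<exists>a v. v \<noteq> 0 \<and> L = {a + t *\<^sub>R v | t. True})"

definition rectangle_locus :: "point set \<Rightarrow> point set \<Rightarrow> point set \<Rightarrow> point set \<Rightarrow> point set" where
  "rectangle_locus L1 L3 L2 L4 =
     {p. \<exists>a1 a3 b2 b4. a1 \<in> L1 \<and> a3 \<in> L3 \<and> b2 \<in> L2 \<and> b4 \<in> L4 \<and>
          p = midpoint a1 a3 \<and> p = midpoint b2 b4 \<and> dist a1 a3 = dist b2 b4}"

text \<open>Possibly degenerate hyperbola.\<close>
definition is_hyperbola :: "point set \<Rightarrow> bool" where
  "is_hyperbola H \<longleftrightarrow> (\<exists>(C::real^2^2) p k. transpose C = C \<and> det C < 0 \<and>
      H = {x. (x - p) \<bullet> (C *v (x - p)) = k})"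

definition is_line_minus_open_segment :: "point set \<Rightarrow> bool" where
  "is_line_minus_open_segment S \<longleftrightarrow> (\<exists>L a b. is_line L \<and> a \<in> L \<and> b \<in> L \<and> a \<noteq> b \<and>
      S = L - open_segment a b)"

end

theory Submission
  imports Defs
begin

(* For lines L, L' and a point p, the segments joining L and L' with midpoint p are those from
  p + w to p - w; collect their squared half-lengths |w|^2. The point p lies in the rectangle
  locus iff the two sets obtained from the two pairs meet. If L and L' are not parallel there is
  exactly one such segment, and w = U p + k is affine in p with det U = -1; if they are parallel
  the set is a ray [h, oo) for p on the midline and empty elsewhere. So the locus is given either
  by |U p + k|^2 = |W p + l|^2, a conic whose quadratic part U^T U - W^T W is zero or indefinite
  (two distinct positive definite forms of equal determinant differ by an indefinite one), or by
  a quadratic inequality along a midline, or by two linear equations. *)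

section \<open>Lines in the plane\<close>

definition perp :: "point \<Rightarrow> point" where
  "perp v = vector [- v$2, v$1]"

lemma perp_component [simp]: "perp v $ 1 = - v$2" "perp v $ 2 = v$1"
  by (simp_all add: perp_def)

lemma inner_point: "(x::point) \<bullet> y = x$1 * y$1 + x$2 * y$2"
  by (simp add: inner_vec_def sum_2)

lemma point_eq_iff: "(x::point) = y \<longleftrightarrow> x$1 = y$1 \<and> x$2 = y$2"
  by (simp add: vec_eq_iff forall_2)

lemma perp_perp [simp]: "perp (perp v) = - v"
  by (simp add: point_eq_iff)

lemma inner_perp_self [simp]: "perp v \<bullet> v = 0" "v \<bullet> perp v = 0"
  by (simp_all add: inner_point)

lemma inner_perp_perp [simp]: "perp u \<bullet> perp v = u \<bullet> v"
  by (simp add: inner_point)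

lemma inner_perp_left: "u \<bullet> perp v = - (perp u \<bullet> v)"
  by (simp add: inner_point)

lemma inner_perp_commute: "perp u \<bullet> v = - (perp v \<bullet> u)"
  by (simp add: inner_point)

lemma perp_zero [simp]: "perp 0 = 0"
  by (simp add: point_eq_iff)

lemma perp_scaleR [simp]: "perp (s *\<^sub>R v) = s *\<^sub>R perp v"
  by (simp add: point_eq_iff)

lemma perp_eq_0_iff [simp]: "perp v = 0 \<longleftrightarrow> v = 0"
  by (auto simp: point_eq_iff)

lemma perp_decomposition:
  "(v \<bullet> v) *\<^sub>R x = (v \<bullet> x) *\<^sub>R v + (perp v \<bullet> x) *\<^sub>R perp v"
  by (simp add: point_eq_iff inner_point algebra_simps)

lemma inner_perp_eq_0_iff:
  assumes "v \<noteq> 0"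
  shows "perp v \<bullet> x = 0 \<longleftrightarrow> (\<exists>t. x = t *\<^sub>R v)"
proof
  assume "perp v \<bullet> x = 0"
  then have "(v \<bullet> v) *\<^sub>R x = (v \<bullet> v) *\<^sub>R (((v \<bullet> x) / (v \<bullet> v)) *\<^sub>R v)"
    using perp_decomposition[of v x] assms by simp
  then have "x = ((v \<bullet> x) / (v \<bullet> v)) *\<^sub>R v"
    using assms by (metis inner_eq_zero_iff scaleR_cancel_left)
  then show "\<exists>t. x = t *\<^sub>R v" ..
qed auto

lemma line_eq_hyperplane:
  assumes "v \<noteq> 0"
  shows "{a + t *\<^sub>R v | t. True} = {x. perp v \<bullet> x = perp v \<bullet> a}"
proof -
  have "x \<in> {a + t *\<^sub>R v | t. True} \<longleftrightarrow> (\<exists>t. x - a = t *\<^sub>R v)" for x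
    by (auto simp: algebra_simps)
  also have "\<dots> x \<longleftrightarrow> perp v \<bullet> (x - a) = 0" for x
    using inner_perp_eq_0_iff[OF assms] by simp
  finally show ?thesis by (auto simp: inner_diff_right)
qed

lemma hyperplane_eq_line:
  assumes "n \<noteq> 0"
  obtains a where "{x. n \<bullet> x = c} = {a + t *\<^sub>R perp n | t. True}"
proof
  define a where "a = (c / (n \<bullet> n)) *\<^sub>R n"
  have "n \<bullet> a = c" using assms by (simp add: a_def)
  then show "{x. n \<bullet> x = c} = {a + t *\<^sub>R perp n | t. True}"
    using line_eq_hyperplane[of "perp n" a] assms by simp
qed

lemma is_line_iff_hyperplane:
  "is_line L \<longleftrightarrow> (\<exists>n c. n \<noteq> 0 \<and> L = {x. n \<bullet> x = c})"
proof
  assume "is_line L"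
  then obtain a v where "v \<noteq> 0" "L = {a + t *\<^sub>R v | t. True}"
    unfolding is_line_def by blast
  then show "\<exists>n c. n \<noteq> 0 \<and> L = {x. n \<bullet> x = c}"
    using line_eq_hyperplane perp_eq_0_iff by metis
next
  assume "\<exists>n c. n \<noteq> 0 \<and> L = {x. n \<bullet> x = c}"
  then obtain n c where "n \<noteq> 0" "L = {x. n \<bullet> x = c}" by blast
  then show "is_line L"
    unfolding is_line_def by (metis hyperplane_eq_line perp_eq_0_iff)
qed

lemma is_line_hyperplane:
  "n \<noteq> 0 \<Longrightarrow> is_line {x. n \<bullet> x = c}"
  using is_line_iff_hyperplane by blast

lemma line_through_two_points:
  assumes "is_line L" "p \<in> L" "q \<in> L" "p \<noteq> q"
  shows "L = {p + t *\<^sub>R (q - p) | t. True}"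
proof -
  obtain a v where v: "v \<noteq> 0" and "L = {a + t *\<^sub>R v | t. True}"
    using assms(1) unfolding is_line_def by blast
  then have "L = {x. perp v \<bullet> x = perp v \<bullet> a}" using line_eq_hyperplane[OF v] by simp
  with assms(2) have L: "L = {x. perp v \<bullet> x = perp v \<bullet> p}" by simp
  with assms(3) have "perp v \<bullet> (q - p) = 0" by (simp add: inner_diff_right)
  then obtain s where s: "q - p = s *\<^sub>R v" using inner_perp_eq_0_iff[OF v] by blast
  with assms(4) have "s \<noteq> 0" by auto
  have "{p + t *\<^sub>R (q - p) | t. True} = {x. perp (q - p) \<bullet> x = perp (q - p) \<bullet> p}"
    using line_eq_hyperplane assms(4) by simp
  also have "\<dots> = L" using \<open>s \<noteq> 0\<close> by (simp add: L s)
  finally show ?thesis by simp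
qed

lemma line_inter_line_cases:
  assumes "is_line L" "is_line L'"
  shows "L \<inter> L' = {} \<or> (\<exists>q. L \<inter> L' = {q}) \<or> is_line (L \<inter> L')"
proof (cases "L = L'")
  case False
  have "p = q" if "p \<in> L \<inter> L'" "q \<in> L \<inter> L'" for p q
  proof (rule ccontr)
    assume "p \<noteq> q"
    then have "L = L'"
      using that line_through_two_points[OF assms(1), of p q] line_through_two_points[OF assms(2), of p q]
      by simp
    with False show False ..
  qed
  then show ?thesis by blast
qed (use assms in simp)

section \<open>Half-diagonals\<close>

definition half_diag_sq :: "point set \<Rightarrow> point set \<Rightarrow> point \<Rightarrow> real set" where
  "half_diag_sq L L' p = {(norm w)\<^sup>2 | w. p + w \<in> L \<and> p - w \<in> L'}"

lemma midpoint_plus_minus [simp]: "midpoint (p + w) (p - w) = (p::point)"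
  by (simp add: midpoint_eq_iff)

lemma dist_plus_minus: "dist (p + w) (p - w) = 2 * norm (w::point)"
proof -
  have "p + w - (p - w) = 2 *\<^sub>R w" by (simp add: scaleR_2)
  then show ?thesis by (simp add: dist_norm)
qed

lemma midpoint_eq_imp_reflection: "p = midpoint a b \<Longrightarrow> b = p - (a - (p::point))"
  by (simp add: eq_commute[of p] midpoint_eq_iff algebra_simps)

lemma rectangle_locus_eq_half_diag_sq:
  "rectangle_locus L1 L3 L2 L4 = {p. half_diag_sq L1 L3 p \<inter> half_diag_sq L2 L4 p \<noteq> {}}"
proof -
  have "p \<in> rectangle_locus L1 L3 L2 L4 \<longleftrightarrow>
      (\<exists>w u. p + w \<in> L1 \<and> p - w \<in> L3 \<and> p + u \<in> L2 \<and> p - u \<in> L4 \<and> (norm w)\<^sup>2 = (norm u)\<^sup>2)"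
    for p
  proof
    assume "p \<in> rectangle_locus L1 L3 L2 L4"
    then obtain a1 a3 b2 b4 where in_lines: "a1 \<in> L1" "a3 \<in> L3" "b2 \<in> L2" "b4 \<in> L4"
      and mid: "p = midpoint a1 a3" "p = midpoint b2 b4" and "dist a1 a3 = dist b2 b4"
      unfolding rectangle_locus_def by blast
    have a3: "a3 = p - (a1 - p)" and b4: "b4 = p - (b2 - p)"
      using midpoint_eq_imp_reflection[OF mid(1)] midpoint_eq_imp_reflection[OF mid(2)] .
    have "p + (a1 - p) \<in> L1" "p - (a1 - p) \<in> L3" "p + (b2 - p) \<in> L2" "p - (b2 - p) \<in> L4"
      using in_lines by (simp_all flip: a3 b4)
    moreover have "(norm (a1 - p))\<^sup>2 = (norm (b2 - p))\<^sup>2"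
      using \<open>dist a1 a3 = dist b2 b4\<close> dist_plus_minus[of p "a1 - p"] dist_plus_minus[of p "b2 - p"]
      by (simp flip: a3 b4)
    ultimately
    show "\<exists>w u. p + w \<in> L1 \<and> p - w \<in> L3 \<and> p + u \<in> L2 \<and> p - u \<in> L4 \<and> (norm w)\<^sup>2 = (norm u)\<^sup>2"
      by blast
  next
    assume "\<exists>w u. p + w \<in> L1 \<and> p - w \<in> L3 \<and> p + u \<in> L2 \<and> p - u \<in> L4 \<and> (norm w)\<^sup>2 = (norm u)\<^sup>2"
    then obtain w u where "p + w \<in> L1" "p - w \<in> L3" "p + u \<in> L2" "p - u \<in> L4"
      and "(norm w)\<^sup>2 = (norm u)\<^sup>2" by blast
    moreover from this have "dist (p + w) (p - w) = dist (p + u) (p - u)"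
      by (simp add: dist_plus_minus power2_eq_iff_nonneg)
    moreover have "p = midpoint (p + w) (p - w)" "p = midpoint (p + u) (p - u)" by simp_all
    ultimately show "p \<in> rectangle_locus L1 L3 L2 L4"
      unfolding rectangle_locus_def by blast
  qed
  then show ?thesis
    unfolding half_diag_sq_def by blast
qed

lemma sq_norms_on_hyperplane:
  fixes n :: point
  assumes "n \<noteq> 0"
  shows "{(norm w)\<^sup>2 | w. n \<bullet> w = b} = {b\<^sup>2 / (n \<bullet> n)..}"
proof (intro set_eqI iffI)
  have nn: "n \<bullet> n > 0" using assms by simp
  fix r
  assume "r \<in> {(norm w)\<^sup>2 | w. n \<bullet> w = b}"
  then obtain w where "n \<bullet> w = b" "r = (norm w)\<^sup>2" by blast
  then have "b\<^sup>2 \<le> (n \<bullet> n) * r"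
    using Cauchy_Schwarz_ineq[of n w] by (simp add: power2_norm_eq_inner)
  then show "r \<in> {b\<^sup>2 / (n \<bullet> n)..}" using nn by (simp add: field_simps)
next
  have nn: "n \<bullet> n > 0" using assms by simp
  fix r
  assume "r \<in> {b\<^sup>2 / (n \<bullet> n)..}"
  then have r: "r - b\<^sup>2 / (n \<bullet> n) \<ge> 0" by simp
  define t where "t = sqrt ((r - b\<^sup>2 / (n \<bullet> n)) / (n \<bullet> n))"
  define w where "w = (b / (n \<bullet> n)) *\<^sub>R n + t *\<^sub>R perp n"
  have "n \<bullet> w = b" using nn by (simp add: w_def inner_add_right)
  moreover have "(norm w)\<^sup>2 = (b / (n \<bullet> n))\<^sup>2 * (n \<bullet> n) + t\<^sup>2 * (n \<bullet> n)"
    unfolding power2_norm_eq_inner w_def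
    by (simp add: inner_add_left inner_add_right power2_eq_square)
  moreover have "(b / (n \<bullet> n))\<^sup>2 * (n \<bullet> n) = b\<^sup>2 / (n \<bullet> n)"
    using nn by (simp add: power2_eq_square)
  moreover have "t\<^sup>2 * (n \<bullet> n) = r - b\<^sup>2 / (n \<bullet> n)"
    using r nn by (simp add: t_def)
  ultimately have "(norm w)\<^sup>2 = r" by simp
  with \<open>n \<bullet> w = b\<close> show "r \<in> {(norm w)\<^sup>2 | w. n \<bullet> w = b}" by blast
qed

lemma half_diag_sq_parallel:
  fixes n :: point
  assumes "n \<noteq> 0"
  shows "half_diag_sq {x. n \<bullet> x = c} {x. n \<bullet> x = e} p =
    (if 2 * (n \<bullet> p) = c + e then {((c - e) / 2)\<^sup>2 / (n \<bullet> n)..} else {})"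
proof -
  have "p + w \<in> {x. n \<bullet> x = c} \<and> p - w \<in> {x. n \<bullet> x = e} \<longleftrightarrow>
      n \<bullet> w = c - n \<bullet> p \<and> 2 * (n \<bullet> p) = c + e" for w
    by (auto simp: inner_add_right inner_diff_right)
  then have "half_diag_sq {x. n \<bullet> x = c} {x. n \<bullet> x = e} p =
      {(norm w)\<^sup>2 | w. n \<bullet> w = c - n \<bullet> p \<and> 2 * (n \<bullet> p) = c + e}"
    unfolding half_diag_sq_def by (simp only:)
  also have "\<dots> = (if 2 * (n \<bullet> p) = c + e then {(norm w)\<^sup>2 | w. n \<bullet> w = (c - e) / 2} else {})"
    by auto
  finally show ?thesis by (simp only: sq_norms_on_hyperplane[OF assms])
qed

lemma inner_pair_eq_iff_cramer:
  assumes \<Delta>: "perp n \<bullet> m \<noteq> 0"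
  shows "n \<bullet> w = \<alpha> \<and> m \<bullet> w = \<beta> \<longleftrightarrow>
    w = (1 / (perp n \<bullet> m)) *\<^sub>R (\<beta> *\<^sub>R perp n - \<alpha> *\<^sub>R perp m)"
    (is "_ \<longleftrightarrow> w = ?w")
proof -
  have sol: "n \<bullet> ?w = \<alpha>" "m \<bullet> ?w = \<beta>"
    using \<Delta> by (simp_all add: inner_diff_right inner_perp_left inner_perp_commute[of m n])
  have "d = 0" if "n \<bullet> d = 0" "m \<bullet> d = 0" for d
  proof -
    have "n \<noteq> 0" using \<Delta> by auto
    then have "\<exists>t. d = t *\<^sub>R perp n"
      using inner_perp_eq_0_iff[of "perp n" d] that(1) by simp
    then obtain t where "d = t *\<^sub>R perp n" ..
    then show "d = 0" using that(2) \<Delta> by (simp add: inner_commute[of m])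
  qed
  from this[of "w - ?w"] sol show ?thesis
    by (auto simp: inner_diff_right)
qed

lemma half_diag_sq_nonparallel:
  fixes n m :: point
  assumes "perp n \<bullet> m \<noteq> 0"
  obtains U :: "real^2^2" and k where "det U = -1"
    and "\<And>p. half_diag_sq {x. n \<bullet> x = c} {x. m \<bullet> x = e} p = {(norm (U *v p + k))\<^sup>2}"
proof -
  define \<Delta> where "\<Delta> = perp n \<bullet> m"
  have \<Delta>: "\<Delta> \<noteq> 0" using assms by (simp add: \<Delta>_def)
  define U :: "real^2^2" where "U = (\<chi> i j. (perp n $ i * m $ j + perp m $ i * n $ j) / \<Delta>)"
  define k where "k = (- 1 / \<Delta>) *\<^sub>R (e *\<^sub>R perp n + c *\<^sub>R perp m)"
  have Uv: "U *v p = (1 / \<Delta>) *\<^sub>R ((m \<bullet> p) *\<^sub>R perp n + (n \<bullet> p) *\<^sub>R perp m)" for p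
    by (simp add: U_def point_eq_iff matrix_vector_mult_def sum_2 inner_point
        add_divide_distrib algebra_simps)
  have "det U * \<Delta>\<^sup>2 = (- 1) * \<Delta>\<^sup>2"
    using \<Delta> by (simp add: det_2 U_def power2_eq_square field_simps)
      (simp add: \<Delta>_def inner_point algebra_simps)
  then have "det U = -1" using \<Delta> by (subst (asm) mult_right_cancel) simp_all
  moreover have "p + w \<in> {x. n \<bullet> x = c} \<and> p - w \<in> {x. m \<bullet> x = e} \<longleftrightarrow> w = U *v p + k"
    for p w
  proof -
    have "p + w \<in> {x. n \<bullet> x = c} \<and> p - w \<in> {x. m \<bullet> x = e} \<longleftrightarrow>
        n \<bullet> w = c - n \<bullet> p \<and> m \<bullet> w = m \<bullet> p - e"
      by (auto simp: inner_add_right inner_diff_right)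
    also have "\<dots> \<longleftrightarrow> w = (1 / \<Delta>) *\<^sub>R ((m \<bullet> p - e) *\<^sub>R perp n - (c - n \<bullet> p) *\<^sub>R perp m)"
      using inner_pair_eq_iff_cramer[OF assms] by (simp add: \<Delta>_def)
    also have "(1 / \<Delta>) *\<^sub>R ((m \<bullet> p - e) *\<^sub>R perp n - (c - n \<bullet> p) *\<^sub>R perp m) = U *v p + k"
      by (simp add: Uv k_def algebra_simps)
    finally show ?thesis .
  qed
  then have "half_diag_sq {x. n \<bullet> x = c} {x. m \<bullet> x = e} p = {(norm (U *v p + k))\<^sup>2}" for p
    unfolding half_diag_sq_def by auto
  ultimately show ?thesis using that by blast
qed

lemma half_diag_sq_cases:
  assumes "is_line L" "is_line L'"
  shows "(\<exists>U k. det U = -1 \<and> (\<forall>p. half_diag_sq L L' p = {(norm (U *v p + k))\<^sup>2}))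
       \<or> (\<exists>n c h. n \<noteq> 0 \<and> (\<forall>p. half_diag_sq L L' p = (if n \<bullet> p = c then {h..} else {})))"
proof -
  obtain n c m e where n: "n \<noteq> 0" and m: "m \<noteq> 0"
    and L: "L = {x. n \<bullet> x = c}" and L': "L' = {x. m \<bullet> x = e}"
    using assms is_line_iff_hyperplane by metis
  show ?thesis
  proof (cases "perp n \<bullet> m = 0")
    case False
    then show ?thesis
      using half_diag_sq_nonparallel[OF False] unfolding L L' by metis
  next
    case True
    define s where "s = (n \<bullet> m) / (n \<bullet> n)"
    have "(n \<bullet> n) *\<^sub>R m = (n \<bullet> n) *\<^sub>R (s *\<^sub>R n)"
      using perp_decomposition[of n m] True n by (simp add: s_def)
    then have m_eq: "m = s *\<^sub>R n" using n by (simp only: scaleR_cancel_left) simp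
    then have "s \<noteq> 0" using m by auto
    then have "L' = {x. n \<bullet> x = e / s}"
      by (auto simp: L' m_eq field_simps)
    then have "\<forall>p. half_diag_sq L L' p =
        (if (2 *\<^sub>R n) \<bullet> p = c + e / s then {((c - e / s) / 2)\<^sup>2 / (n \<bullet> n)..} else {})"
      using half_diag_sq_parallel[OF n] by (simp add: L)
    moreover have "2 *\<^sub>R n \<noteq> 0" using n by simp
    ultimately show ?thesis by blast
  qed
qed

section \<open>Conics\<close>

lemma inner_matrix_symmetric:
  assumes "transpose Q = Q"
  shows "x \<bullet> (Q *v y) = (Q *v x) \<bullet> (y::real^'n)"
  by (metis assms dot_lmul_matrix vector_transpose_matrix)

lemma is_hyperbola_quadric:
  fixes Q :: "real^2^2"
  assumes "transpose Q = Q" "det Q < 0"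
  shows "is_hyperbola {x. x \<bullet> (Q *v x) + b \<bullet> x = c}"
proof -
  obtain Q' where Q': "Q ** Q' = mat 1"
    using assms(2) invertible_det_nz[of Q] unfolding invertible_def by auto
  define p where "p = Q' *v ((- 1/2) *\<^sub>R b)"
  have Qp: "Q *v p = (- 1/2) *\<^sub>R b"
    by (simp add: p_def matrix_vector_mul_assoc Q')
  have "(x - p) \<bullet> (Q *v (x - p)) = x \<bullet> (Q *v x) + b \<bullet> x + p \<bullet> (Q *v p)" for x
  proof -
    have "p \<bullet> (Q *v x) = (- 1/2) * (b \<bullet> x)"
      by (simp add: inner_matrix_symmetric[OF assms(1)] Qp)
    then show ?thesis
      by (simp add: matrix_vector_mult_diff_distrib inner_diff_left inner_diff_right
          inner_add_right Qp inner_commute[of x b] field_simps)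
  qed
  then have "{x. x \<bullet> (Q *v x) + b \<bullet> x = c} = {x. (x - p) \<bullet> (Q *v (x - p)) = c + p \<bullet> (Q *v p)}"
    by auto
  then show ?thesis unfolding is_hyperbola_def using assms by blast
qed

lemma linear_equation_cases:
  fixes b :: point
  shows "{x. b \<bullet> x = c} = {} \<or> is_line {x. b \<bullet> x = c} \<or> {x. b \<bullet> x = c} = UNIV"
  using is_line_hyperplane[of b c] by (cases "b = 0") auto

lemma quadric_cases:
  fixes Q :: "real^2^2"
  assumes "transpose Q = Q" "Q = 0 \<or> det Q < 0"
    and S: "S = {x. x \<bullet> (Q *v x) + b \<bullet> x = c}"
  shows "S = {} \<or> is_line S \<or> is_hyperbola S \<or> S = UNIV"
  using assms(2)
proof
  assume "Q = 0"
  then have "S = {x. b \<bullet> x = c}" by (simp add: S)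
  then show ?thesis using linear_equation_cases[of b c] by blast
qed (use assms is_hyperbola_quadric in blast)

lemma norm_affine_sq:
  fixes U :: "real^'n^'n"
  shows "(norm (U *v p + k))\<^sup>2 = p \<bullet> ((transpose U ** U) *v p) + 2 * ((k v* U) \<bullet> p) + k \<bullet> k"
proof -
  have "(U *v p) \<bullet> (U *v p) = (p v* transpose U) \<bullet> (U *v p)"
    by (simp only: vector_transpose_matrix)
  also have "\<dots> = p \<bullet> ((transpose U ** U) *v p)"
    by (simp only: dot_lmul_matrix matrix_vector_mul_assoc)
  finally have "(U *v p) \<bullet> (U *v p) = p \<bullet> ((transpose U ** U) *v p)" .
  moreover have "(U *v p) \<bullet> k = (k v* U) \<bullet> p"
    unfolding dot_lmul_matrix by (rule inner_commute)
  moreover have "(norm (U *v p + k))\<^sup>2 = (U *v p) \<bullet> (U *v p) + 2 * ((U *v p) \<bullet> k) + k \<bullet> k"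
    unfolding power2_norm_eq_inner
    by (simp only: inner_add_left inner_add_right inner_commute[of k "U *v p"])
  ultimately show ?thesis by simp
qed

lemma gram_matrix_2:
  fixes U :: "real^2^2"
  assumes "det U \<noteq> 0"
  shows "transpose (transpose U ** U) = transpose U ** U"
    and "(transpose U ** U) $ 1 $ 1 > 0"
    and "det (transpose U ** U) = (det U)\<^sup>2"
proof -
  show "transpose (transpose U ** U) = transpose U ** U"
    by (simp add: matrix_transpose_mul)
  show "det (transpose U ** U) = (det U)\<^sup>2"
    by (simp add: det_mul power2_eq_square)
  have "U $ 1 $ 1 \<noteq> 0 \<or> U $ 2 $ 1 \<noteq> 0"
    using assms by (auto simp: det_2)
  then show "(transpose U ** U) $ 1 $ 1 > 0"
    by (simp add: matrix_matrix_mult_def transpose_def sum_2 sum_power2_gt_zero_iff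
        flip: power2_eq_square)
qed

lemma equal_det_pos_def_2_cases:
  fixes a1 b1 c1 a2 b2 c2 d :: real
  assumes det1: "a1 * c1 - b1\<^sup>2 = d" and det2: "a2 * c2 - b2\<^sup>2 = d"
    and "d > 0" "a1 > 0" "a2 > 0"
  shows "(a1 = a2 \<and> b1 = b2 \<and> c1 = c2) \<or> (a1 - a2) * (c1 - c2) - (b1 - b2)\<^sup>2 < 0"
proof (rule ccontr)
  assume contra: "\<not> ?thesis"
  have "a1 * c1 > 0" "a2 * c2 > 0"
    using det1 det2 \<open>d > 0\<close> zero_le_power2[of b1] zero_le_power2[of b2] by linarith+
  then have "c1 > 0" "c2 > 0"
    using \<open>a1 > 0\<close> \<open>a2 > 0\<close> by (simp_all add: zero_less_mult_iff)
  (* s is the mixed determinant of the two forms; the identity for s\<^sup>2 below shows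
    s \<ge> 2 d + 2 b1 b2, with equality only if the forms coincide. *)
  define s where "s = a1 * c2 + a2 * c1"
  have "s > 0" using assms \<open>c1 > 0\<close> \<open>c2 > 0\<close> by (simp add: s_def add_pos_pos)
  have "(a1 - a2) * (c1 - c2) - (b1 - b2)\<^sup>2 = 2 * d + 2 * b1 * b2 - s"
    using det1 det2 by (simp add: s_def power2_eq_square algebra_simps)
  then have "s \<le> 2 * d + 2 * b1 * b2" using contra by linarith
  then have "s\<^sup>2 \<le> (2 * d + 2 * b1 * b2)\<^sup>2"
    using \<open>s > 0\<close> by (simp add: power_mono)
  moreover have "s\<^sup>2 = (2 * d + 2 * b1 * b2)\<^sup>2 + 4 * d * (b1 - b2)\<^sup>2 + (a1 * c2 - a2 * c1)\<^sup>2"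
  proof -
    have "a1 * c1 = d + b1\<^sup>2" "a2 * c2 = d + b2\<^sup>2" using det1 det2 by simp_all
    then have "4 * (a1 * c1) * (a2 * c2) = (2 * d + 2 * b1 * b2)\<^sup>2 + 4 * d * (b1 - b2)\<^sup>2"
      by (simp add: power2_eq_square algebra_simps)
    moreover have "s\<^sup>2 = 4 * (a1 * c1) * (a2 * c2) + (a1 * c2 - a2 * c1)\<^sup>2"
      by (simp add: s_def power2_eq_square algebra_simps)
    ultimately show ?thesis by simp
  qed
  moreover have "4 * d * (b1 - b2)\<^sup>2 \<ge> 0" using \<open>d > 0\<close> by simp
  moreover have "(a1 * c2 - a2 * c1)\<^sup>2 \<ge> 0" by simp
  ultimately have "4 * d * (b1 - b2)\<^sup>2 = 0" "(a1 * c2 - a2 * c1)\<^sup>2 = 0"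
    by linarith+
  then have b: "b1 = b2" and ac: "a1 * c2 = a2 * c1" using \<open>d > 0\<close> by auto
  then have "a1 * c1 = a2 * c2" using det1 det2 by simp
  with ac have "a1 * a1 * (c1 * c2) = a2 * a2 * (c1 * c2)"
    by (metis mult.assoc mult.commute)
  then have "a1 = a2"
    using \<open>c1 > 0\<close> \<open>c2 > 0\<close> assms(4,5) by (simp flip: power2_eq_square)
  then show False using contra b ac assms(4) by simp
qed

lemma symmetric_matrix_2:
  fixes A :: "real^2^2"
  assumes "transpose A = A"
  shows "A $ 2 $ 1 = A $ 1 $ 2"
  using arg_cong[OF assms, of "\<lambda>M. M $ 1 $ 2"] by (simp add: transpose_def)

lemma pos_def_equal_det_cases:
  fixes A B :: "real^2^2"
  assumes "transpose A = A" "transpose B = B" "A $ 1 $ 1 > 0" "B $ 1 $ 1 > 0"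
    and "det A = det B" "det A > 0"
  shows "A = B \<or> det (A - B) < 0"
proof -
  have "A $ 1 $ 1 * A $ 2 $ 2 - (A $ 1 $ 2)\<^sup>2 = det A"
    "B $ 1 $ 1 * B $ 2 $ 2 - (B $ 1 $ 2)\<^sup>2 = det A"
    using assms symmetric_matrix_2 by (simp_all add: det_2 power2_eq_square)
  from equal_det_pos_def_2_cases[OF this assms(6,3,4)]
  show ?thesis
    using assms symmetric_matrix_2[OF assms(1)] symmetric_matrix_2[OF assms(2)]
    by (auto simp: det_2 vec_eq_iff forall_2 power2_eq_square algebra_simps)
qed

lemma equal_norm_affine_cases:
  fixes U W :: "real^2^2"
  assumes "det U \<noteq> 0" "\<bar>det U\<bar> = \<bar>det W\<bar>"
    and S: "S = {p. (norm (U *v p + k))\<^sup>2 = (norm (W *v p + l))\<^sup>2}"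
  shows "S = {} \<or> is_line S \<or> is_hyperbola S \<or> S = UNIV"
proof -
  define G H where "G = transpose U ** U" and "H = transpose W ** W"
  have "det W \<noteq> 0" using assms(1,2) by auto
  note gU = gram_matrix_2[OF assms(1), folded G_def]
    and gW = gram_matrix_2[OF \<open>det W \<noteq> 0\<close>, folded H_def]
  have "(det U)\<^sup>2 = (det W)\<^sup>2" using assms(2) by (metis power2_abs)
  then have "det G = det H" "det G > 0"
    using gU(3) gW(3) \<open>det W \<noteq> 0\<close> by simp_all
  then have "G - H = 0 \<or> det (G - H) < 0"
    using pos_def_equal_det_cases[OF gU(1) gW(1) gU(2) gW(2)] by auto
  moreover have "transpose (G - H) = G - H"
    using gU(1) gW(1) by (simp add: transpose_def vec_eq_iff)
  moreover have "S = {p. p \<bullet> ((G - H) *v p) + (2 *\<^sub>R (k v* U - l v* W)) \<bullet> p = l \<bullet> l - k \<bullet> k}"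
    unfolding S norm_affine_sq G_def H_def
    by (auto simp: matrix_vector_mult_diff_rdistrib inner_diff_right inner_diff_left)
  ultimately show ?thesis using quadric_cases by blast
qed

section \<open>Quadratic inequalities along a line\<close>

lemma quadratic_nonneg_cases:
  fixes A B C :: real
  assumes "A > 0"
  shows "(\<forall>t. 0 \<le> A * t\<^sup>2 + B * t + C) \<or>
    (\<exists>t1 t2. t1 < t2 \<and> (\<forall>t. 0 \<le> A * t\<^sup>2 + B * t + C \<longleftrightarrow> \<not> (t1 < t \<and> t < t2)))"
proof (cases "B\<^sup>2 - 4 * A * C \<le> 0")
  case True
  have "0 \<le> A * t\<^sup>2 + B * t + C" for t
  proof -
    have "4 * A * (A * t\<^sup>2 + B * t + C) = (2 * A * t + B)\<^sup>2 - (B\<^sup>2 - 4 * A * C)"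
      by (simp add: power2_eq_square algebra_simps)
    also have "\<dots> \<ge> 0" using True zero_le_power2[of "2 * A * t + B"] by linarith
    finally show ?thesis using assms by (simp add: zero_le_mult_iff)
  qed
  then show ?thesis by blast
next
  case False
  define r where "r = sqrt (B\<^sup>2 - 4 * A * C)"
  have "r > 0" "r\<^sup>2 = B\<^sup>2 - 4 * A * C" using False by (simp_all add: r_def)
  define t1 t2 where "t1 = (- B - r) / (2 * A)" and "t2 = (- B + r) / (2 * A)"
  have "t1 < t2" using \<open>r > 0\<close> assms by (simp add: t1_def t2_def divide_strict_right_mono)
  have factor: "A * t\<^sup>2 + B * t + C = A * ((t - t1) * (t - t2))" for t
  proof -
    have "4 * A * (A * ((t - t1) * (t - t2))) = (2 * A * t + B - r) * (2 * A * t + B + r)"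
      using assms by (simp add: t1_def t2_def field_simps)
    also have "\<dots> = 4 * A * (A * t\<^sup>2 + B * t + C)"
      using \<open>r\<^sup>2 = _\<close> by (simp add: power2_eq_square algebra_simps)
    finally show ?thesis using assms by simp
  qed
  have "0 \<le> A * t\<^sup>2 + B * t + C \<longleftrightarrow> \<not> (t1 < t \<and> t < t2)" for t
    unfolding factor using assms \<open>t1 < t2\<close> by (auto simp: zero_le_mult_iff)
  then show ?thesis using \<open>t1 < t2\<close> by blast
qed

lemma open_segment_on_line:
  fixes a v :: "'a::real_vector"
  assumes "v \<noteq> 0" "t1 < t2"
  shows "a + t *\<^sub>R v \<in> open_segment (a + t1 *\<^sub>R v) (a + t2 *\<^sub>R v) \<longleftrightarrow> t1 < t \<and> t < t2"
proof -
  have lin: "linear (\<lambda>t::real. t *\<^sub>R v)"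
    by (simp add: bounded_linear_scaleR_left bounded_linear.linear)
  have inj: "inj (\<lambda>t::real. t *\<^sub>R v)"
    using assms(1) by (simp add: inj_on_def)
  have "t *\<^sub>R v \<in> open_segment (t1 *\<^sub>R v) (t2 *\<^sub>R v) \<longleftrightarrow> t \<in> open_segment t1 t2"
    using open_segment_linear_image[OF lin inj, of t1 t2] inj_image_mem_iff[OF inj] by simp
  then show ?thesis using assms(2) by (simp add: open_segment_eq_real_ivl)
qed

lemma line_superlevel_quadratic:
  fixes a v :: point
  assumes "v \<noteq> 0" "A > 0"
    and S: "S = {a + t *\<^sub>R v | t. 0 \<le> A * t\<^sup>2 + B * t + C}"
  shows "is_line S \<or> is_line_minus_open_segment S"
proof -
  let ?L = "{a + t *\<^sub>R v | t. True}"
  have "is_line ?L" using assms(1) unfolding is_line_def by blast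
  from quadratic_nonneg_cases[OF assms(2), of B C] show ?thesis
  proof (elim disjE exE conjE)
    assume "\<forall>t. 0 \<le> A * t\<^sup>2 + B * t + C"
    then have "S = ?L" by (simp add: S)
    with \<open>is_line ?L\<close> show ?thesis by simp
  next
    fix t1 t2
    assume "t1 < t2" and sign: "\<forall>t. 0 \<le> A * t\<^sup>2 + B * t + C \<longleftrightarrow> \<not> (t1 < t \<and> t < t2)"
    note seg = open_segment_on_line[OF assms(1) \<open>t1 < t2\<close>, of a]
    have "S = ?L - open_segment (a + t1 *\<^sub>R v) (a + t2 *\<^sub>R v)"
    proof (intro set_eqI iffI)
      fix x assume "x \<in> S"
      then obtain t where "x = a + t *\<^sub>R v" "0 \<le> A * t\<^sup>2 + B * t + C" by (auto simp: S)
      with sign seg show "x \<in> ?L - open_segment (a + t1 *\<^sub>R v) (a + t2 *\<^sub>R v)" by blast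
    next
      fix x assume "x \<in> ?L - open_segment (a + t1 *\<^sub>R v) (a + t2 *\<^sub>R v)"
      then obtain t where "x = a + t *\<^sub>R v" "x \<notin> open_segment (a + t1 *\<^sub>R v) (a + t2 *\<^sub>R v)"
        by blast
      with sign seg show "x \<in> S" unfolding S by blast
    qed
    moreover have "a + t1 *\<^sub>R v \<noteq> a + t2 *\<^sub>R v"
      using assms(1) \<open>t1 < t2\<close> by (simp add: scaleR_cancel_right)
    ultimately show ?thesis
      unfolding is_line_minus_open_segment_def using \<open>is_line ?L\<close> by blast
  qed
qed

lemma line_inter_norm_affine_superlevel:
  fixes n :: point and W :: "real^2^2"
  assumes "n \<noteq> 0" "det W \<noteq> 0"
    and S: "S = {p. n \<bullet> p = c \<and> h \<le> (norm (W *v p + l))\<^sup>2}"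
  shows "is_line S \<or> is_line_minus_open_segment S"
proof -
  obtain a where L: "{x. n \<bullet> x = c} = {a + t *\<^sub>R perp n | t. True}"
    using hyperplane_eq_line[OF assms(1)] .
  define v w where "v = perp n" and "w = W *v a + l"
  have "v \<noteq> 0" using assms(1) by (simp add: v_def)
  moreover have "inj ((*v) W)"
    using assms(2) by (simp add: inj_matrix_vector_mult invertible_det_nz)
  ultimately have "W *v v \<noteq> 0"
    using inj_eq[of "(*v) W" v 0] by simp
  define A B C where "A = (W *v v) \<bullet> (W *v v)" and "B = 2 * ((W *v v) \<bullet> w)" and "C = w \<bullet> w - h"
  have "A > 0" using \<open>W *v v \<noteq> 0\<close> by (simp add: A_def)
  have quadratic: "h \<le> (norm (W *v (a + t *\<^sub>R v) + l))\<^sup>2 \<longleftrightarrow> 0 \<le> A * t\<^sup>2 + B * t + C" for t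
  proof -
    have "W *v (a + t *\<^sub>R v) + l = t *\<^sub>R (W *v v) + w"
      by (simp add: w_def matrix_vector_right_distrib matrix_vector_mult_scaleR)
    then have "(norm (W *v (a + t *\<^sub>R v) + l))\<^sup>2 = (norm (t *\<^sub>R (W *v v) + w))\<^sup>2"
      by simp
    also have "\<dots> = A * t\<^sup>2 + B * t + C + h"
      unfolding power2_norm_eq_inner A_def B_def C_def
      by (simp add: inner_add_left inner_add_right inner_commute[of w "W *v v"]
          power2_eq_square algebra_simps)
    finally show ?thesis by linarith
  qed
  have "S = {p \<in> {x. n \<bullet> x = c}. h \<le> (norm (W *v p + l))\<^sup>2}"
    by (simp add: S)
  also have "\<dots> = {p \<in> {a + t *\<^sub>R v | t. True}. h \<le> (norm (W *v p + l))\<^sup>2}"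
    by (simp only: L v_def)
  also have "\<dots> = {a + t *\<^sub>R v | t. 0 \<le> A * t\<^sup>2 + B * t + C}"
    by (auto simp: quadratic)
  finally have "S = {a + t *\<^sub>R v | t. 0 \<le> A * t\<^sup>2 + B * t + C}" .
  then show ?thesis using line_superlevel_quadratic[OF \<open>v \<noteq> 0\<close> \<open>A > 0\<close>] by blast
qed

section \<open>The rectangle locus\<close>

lemma rectangle_locus_swap: "rectangle_locus L1 L3 L2 L4 = rectangle_locus L2 L4 L1 L3"
  by (simp add: rectangle_locus_eq_half_diag_sq Int_commute)

lemma rectangle_locus_nonparallel_pairs:
  assumes "det U = -1" "\<forall>p. half_diag_sq L1 L3 p = {(norm (U *v p + k))\<^sup>2}"
    and "det W = -1" "\<forall>p. half_diag_sq L2 L4 p = {(norm (W *v p + l))\<^sup>2}"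
  shows "rectangle_locus L1 L3 L2 L4 = {} \<or> is_line (rectangle_locus L1 L3 L2 L4) \<or>
    is_hyperbola (rectangle_locus L1 L3 L2 L4) \<or> rectangle_locus L1 L3 L2 L4 = UNIV"
proof -
  have "rectangle_locus L1 L3 L2 L4 = {p. (norm (U *v p + k))\<^sup>2 = (norm (W *v p + l))\<^sup>2}"
    using assms by (auto simp: rectangle_locus_eq_half_diag_sq)
  moreover have "det U \<noteq> 0" "\<bar>det U\<bar> = \<bar>det W\<bar>"
    using assms(1,3) by simp_all
  ultimately show ?thesis
    using equal_norm_affine_cases by blast
qed

lemma rectangle_locus_mixed_pairs:
  assumes "det U = -1" "\<forall>p. half_diag_sq L1 L3 p = {(norm (U *v p + k))\<^sup>2}"
    and "n \<noteq> 0" "\<forall>p. half_diag_sq L2 L4 p = (if n \<bullet> p = c then {h..} else {})"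
  shows "is_line (rectangle_locus L1 L3 L2 L4) \<or>
    is_line_minus_open_segment (rectangle_locus L1 L3 L2 L4)"
proof -
  have "rectangle_locus L1 L3 L2 L4 = {p. n \<bullet> p = c \<and> h \<le> (norm (U *v p + k))\<^sup>2}"
    using assms by (auto simp: rectangle_locus_eq_half_diag_sq)
  moreover have "det U \<noteq> 0" using assms(1) by simp
  ultimately show ?thesis
    using line_inter_norm_affine_superlevel[OF \<open>n \<noteq> 0\<close>] by blast
qed

lemma rectangle_locus_parallel_pairs:
  assumes "n \<noteq> 0" "\<forall>p. half_diag_sq L1 L3 p = (if n \<bullet> p = c then {h..} else {})"
    and "n' \<noteq> 0" "\<forall>p. half_diag_sq L2 L4 p = (if n' \<bullet> p = c' then {h'..} else {})"
  shows "rectangle_locus L1 L3 L2 L4 = {} \<or> (\<exists>q. rectangle_locus L1 L3 L2 L4 = {q}) \<or>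
    is_line (rectangle_locus L1 L3 L2 L4)"
proof -
  have "max h h' \<in> {h..} \<inter> {h'..}" by simp
  then have "{h..} \<inter> {h'..} \<noteq> {}" by blast
  then have "rectangle_locus L1 L3 L2 L4 = {x. n \<bullet> x = c} \<inter> {x. n' \<bullet> x = c'}"
    using assms by (auto simp: rectangle_locus_eq_half_diag_sq)
  then show ?thesis
    using line_inter_line_cases[OF is_line_hyperplane is_line_hyperplane] assms(1,3) by metis
qed

theorem corollary4p9:
  fixes L1 L2 L3 L4 :: "point set"
  assumes "is_line L1" "is_line L2" "is_line L3" "is_line L4"
    and "L1 \<noteq> L3" "L2 \<noteq> L4"
    and "{L1, L3} \<noteq> {L2, L4}"
  shows "rectangle_locus L1 L3 L2 L4 = {} \<or>
         (\<exists>q. rectangle_locus L1 L3 L2 L4 = {q}) \<or>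
         is_line_minus_open_segment (rectangle_locus L1 L3 L2 L4) \<or>
         is_line (rectangle_locus L1 L3 L2 L4) \<or>
         is_hyperbola (rectangle_locus L1 L3 L2 L4) \<or>
         rectangle_locus L1 L3 L2 L4 = UNIV"
  using half_diag_sq_cases[OF assms(1,3)] half_diag_sq_cases[OF assms(2,4)]
proof (elim disjE exE conjE)
  fix U k W l
  assume "det U = -1" "\<forall>p. half_diag_sq L1 L3 p = {(norm (U *v p + k))\<^sup>2}"
    and "det W = -1" "\<forall>p. half_diag_sq L2 L4 p = {(norm (W *v p + l))\<^sup>2}"
  then show ?thesis using rectangle_locus_nonparallel_pairs by blast
next
  fix U k n c h
  assume "det U = -1" "\<forall>p. half_diag_sq L1 L3 p = {(norm (U *v p + k))\<^sup>2}"
    and "n \<noteq> 0" "\<forall>p. half_diag_sq L2 L4 p = (if n \<bullet> p = c then {h..} else {})"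
  then show ?thesis using rectangle_locus_mixed_pairs by blast
next
  fix n c h W l
  assume "n \<noteq> 0" "\<forall>p. half_diag_sq L1 L3 p = (if n \<bullet> p = c then {h..} else {})"
    and "det W = -1" "\<forall>p. half_diag_sq L2 L4 p = {(norm (W *v p + l))\<^sup>2}"
  then show ?thesis using rectangle_locus_mixed_pairs rectangle_locus_swap by metis
next
  fix n c h n' c' h'
  assume "n \<noteq> 0" "\<forall>p. half_diag_sq L1 L3 p = (if n \<bullet> p = c then {h..} else {})"
    and "n' \<noteq> 0" "\<forall>p. half_diag_sq L2 L4 p = (if n' \<bullet> p = c' then {h'..} else {})"
  then show ?thesis using rectangle_locus_parallel_pairs by blast
qed

end
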